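(* Let $G$ be a graph, $v$ a vertex, and $T$ a 4-proper $(d,3)$-tree in $G$ rooted at $v$. Suppose every vertex of $G$ is chosen as a seed independently with probability $p=4d^{-7/4}$, and threshold-2 bootstrap percolation is run on $G$. Then, for $d$ sufficiently large, $v$ is activated with probability at least $1/2$.
   Context: Given a graph $G$ of minimum degree at least $d+1$ and a vertex $v$, a $(d,k)$-tree rooted at $v$ is defined inductively: a $(d,0)$-tree is $v$ alone; a $(d,1)$-tree has root $v$ and as leaves $d$ distinct neighbors of $v$; a $(d,k+1)$-tree is obtained from a $(d,k)$-tree by giving each leaf $d$ distinct children chosen among its neighbors in $G$ other than its parent in the tree. (The same vertex of $G$ may appear at several nodes of the tree.) A $(d,k)$-tree is 4-proper if the subgraph of $G$ formed by the edges of $G$ corresponding to tree edges contains no 4-cycle; in particular every $(d,k)$-tree in a graph with no 4-cycles is 4-proper. Bootstrap percolation with threshold 2: given seeds $A_0$, $A_i=A_{i-1}\cup\{u:|N(u)\cap A_{i-1}|\ge 2\}$, where $N(u)$ is the neighborhood of $u$; $u$ is activated if $u\in\bigcup_iA_i$. *)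

theory Defs
  imports Complex_Main
begin

definition fin_graph :: "nat set \<Rightarrow> (nat \<Rightarrow> nat \<Rightarrow> bool) \<Rightarrow> bool" where
  "fin_graph V E \<longleftrightarrow> finite V \<and> (\<forall>u w. E u w \<longrightarrow> u \<in> V \<and> w \<in> V)
     \<and> (\<forall>u w. E u w \<longrightarrow> E w u) \<and> (\<forall>u. \<not> E u u)"

definition nbhd :: "(nat \<Rightarrow> nat \<Rightarrow> bool) \<Rightarrow> nat \<Rightarrow> nat set" where
  "nbhd E u = {w. E u w}"

text \<open>Tree nodes are words over {0..<d} of length at most k; f labels each
  node by a vertex of G. Node s@[i] is the i-th child of node s.\<close>
definition tree_node :: "nat \<Rightarrow> nat \<Rightarrow> nat list \<Rightarrow> bool" where
  "tree_node d k s \<longleftrightarrow> length s \<le> k \<and> set s \<subseteq> {..<d}"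

definition dk_tree :: "(nat \<Rightarrow> nat \<Rightarrow> bool) \<Rightarrow> nat \<Rightarrow> nat \<Rightarrow> nat \<Rightarrow> (nat list \<Rightarrow> nat) \<Rightarrow> bool" where
  "dk_tree E d k v f \<longleftrightarrow> f [] = v \<and>
     (\<forall>s. length s < k \<and> set s \<subseteq> {..<d} \<longrightarrow>
        inj_on (\<lambda>i. f (s @ [i])) {..<d} \<and>
        (\<forall>i<d. E (f s) (f (s @ [i])) \<and> (s \<noteq> [] \<longrightarrow> f (s @ [i]) \<noteq> f (butlast s))))"

definition tree_edges :: "nat \<Rightarrow> nat \<Rightarrow> (nat list \<Rightarrow> nat) \<Rightarrow> nat set set" where
  "tree_edges d k f = {{f s, f (s @ [i])} | s i. length s < k \<and> set s \<subseteq> {..<d} \<and> i < d}"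

definition four_proper :: "nat \<Rightarrow> nat \<Rightarrow> (nat list \<Rightarrow> nat) \<Rightarrow> bool" where
  "four_proper d k f \<longleftrightarrow> \<not> (\<exists>a b c e. distinct [a, b, c, e] \<and>
      {a, b} \<in> tree_edges d k f \<and> {b, c} \<in> tree_edges d k f \<and>
      {c, e} \<in> tree_edges d k f \<and> {e, a} \<in> tree_edges d k f)"

fun boot :: "nat set \<Rightarrow> (nat \<Rightarrow> nat \<Rightarrow> bool) \<Rightarrow> nat set \<Rightarrow> nat \<Rightarrow> nat set" where
  "boot V E A 0 = A"
| "boot V E A (Suc i) = boot V E A i \<union> {u \<in> V. card (nbhd E u \<inter> boot V E A i) \<ge> 2}"

definition activated :: "nat set \<Rightarrow> (nat \<Rightarrow> nat \<Rightarrow> bool) \<Rightarrow> nat set \<Rightarrow> nat \<Rightarrow> bool" where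
  "activated V E A u \<longleftrightarrow> u \<in> (\<Union>i. boot V E A i)"

text \<open>Probability that v is activated when every vertex of V is a seed independently
  with probability p (product Bernoulli measure on the finite set V).\<close>
definition prob_activated :: "nat set \<Rightarrow> (nat \<Rightarrow> nat \<Rightarrow> bool) \<Rightarrow> real \<Rightarrow> nat \<Rightarrow> real" where
  "prob_activated V E p v =
     (\<Sum>S\<in>Pow V. if activated V E S v then p ^ card S * (1 - p) ^ (card V - card S) else 0)"

end

theory Submission
  imports Defs "HOL-Analysis.Convex"
begin

text \<open>
  Call two grandchildren \<open>j1 < j2\<close> of a child \<open>i\<close> of the root, together with two leaves below each
  of them, a witness for \<open>i\<close>. If the four leaves of a witness are seeds, \<open>i\<close> is active after two
  rounds, and two such children activate the root in the third. 4-properness makes the leaves of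
  a witness distinct and lets two distinct leaves have at most one common parent in the tree.

  Let \<open>X\<^sub>i\<close> count the seeded witnesses for \<open>i\<close>. Then \<open>E X\<^sub>i = p\<^sup>4 (d choose 2)\<^sup>3 \<approx> 32/d\<close>, and
  \<open>E X\<^sub>i\<^sup>2 = Q \<cdot> E X\<^sub>i\<close> with \<open>Q \<approx> 1\<close>, so by the second moment method \<open>i\<close> is witnessed with
  probability at least \<open>E X\<^sub>i / Q\<close>. Hence the number \<open>Z\<close> of witnessed children has mean about 32,
  while \<open>E Z\<^sup>2 \<le> \<Sum>\<^sub>i\<^sub>,\<^sub>j E (X\<^sub>i X\<^sub>j)\<close> stays bounded because a fixed witness shares at most 6 leaf
  pairs with the rest of the tree. Then \<open>P (Z \<ge> 2) \<ge> (E Z - 1)\<^sup>2 / E Z\<^sup>2 \<ge> 1/2\<close>.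
\<close>

definition seed_weight :: "'a set \<Rightarrow> real \<Rightarrow> 'a set \<Rightarrow> real" where
  "seed_weight V p S = p ^ card S * (1 - p) ^ (card V - card S)"

definition seed_expectation :: "'a set \<Rightarrow> real \<Rightarrow> ('a set \<Rightarrow> real) \<Rightarrow> real" where
  "seed_expectation V p X = (\<Sum>S\<in>Pow V. seed_weight V p S * X S)"

lemma seed_weight_nonneg: "0 \<le> p \<Longrightarrow> p \<le> 1 \<Longrightarrow> 0 \<le> seed_weight V p S"
  by (simp add: seed_weight_def)

lemma prob_activated_eq_seed_expectation:
  "prob_activated V E p v = seed_expectation V p (\<lambda>S. of_bool (activated V E S v))"
  unfolding prob_activated_def seed_expectation_def seed_weight_def by (intro sum.cong) auto

lemma seed_expectation_subset:
  assumes "finite V" "B \<subseteq> V"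
  shows "seed_expectation V p (\<lambda>S. of_bool (B \<subseteq> S)) = p ^ card B"
proof -
  let ?q = "\<lambda>x. if x \<in> B then 0 else 1 - p"
  have "p ^ card B = (\<Prod>x\<in>V. if x \<in> B then p else 1)"
    using assms by (simp add: prod.If_cases Int_absorb1)
  also have "\<dots> = (\<Prod>x\<in>V. p + ?q x)"
    by (intro prod.cong) auto
  also have "\<dots> = (\<Sum>S\<in>Pow V. (\<Prod>x\<in>S. p) * (\<Prod>x\<in>V - S. ?q x))"
    by (rule prod_add[OF assms(1)])
  also have "\<dots> = seed_expectation V p (\<lambda>S. of_bool (B \<subseteq> S))"
    unfolding seed_expectation_def
  proof (rule sum.cong[OF refl])
    fix S assume S: "S \<in> Pow V"
    show "(\<Prod>x\<in>S. p) * (\<Prod>x\<in>V - S. ?q x) = seed_weight V p S * of_bool (B \<subseteq> S)"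
    proof (cases "B \<subseteq> S")
      case True
      then have "(\<Prod>x\<in>V - S. ?q x) = (\<Prod>x\<in>V - S. 1 - p)" by (intro prod.cong) auto
      with True S assms(1) show ?thesis
        by (simp add: seed_weight_def card_Diff_subset finite_subset)
    next
      case False
      then obtain y where "y \<in> B - S" by auto
      with assms S have "(\<Prod>x\<in>V - S. ?q x) = 0" by (intro prod_zero) auto
      with False show ?thesis by simp
    qed
  qed
  finally show ?thesis by (rule sym)
qed

lemma seed_expectation_const: "finite V \<Longrightarrow> seed_expectation V p (\<lambda>S. c) = c"
  using seed_expectation_subset[of V "{}" p]
  by (simp add: seed_expectation_def flip: sum_distrib_right)

lemma seed_expectation_sum:
  "seed_expectation V p (\<lambda>S. \<Sum>i\<in>I. X i S) = (\<Sum>i\<in>I. seed_expectation V p (X i))"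
  unfolding seed_expectation_def by (simp add: sum_distrib_left sum.swap[of _ I])

lemma seed_expectation_mono:
  "0 \<le> p \<Longrightarrow> p \<le> 1 \<Longrightarrow> (\<And>S. S \<subseteq> V \<Longrightarrow> X S \<le> Y S) \<Longrightarrow>
   seed_expectation V p X \<le> seed_expectation V p Y"
  unfolding seed_expectation_def by (intro sum_mono mult_left_mono seed_weight_nonneg) auto

lemma seed_expectation_nonneg:
  "0 \<le> p \<Longrightarrow> p \<le> 1 \<Longrightarrow> (\<And>S. S \<subseteq> V \<Longrightarrow> 0 \<le> X S) \<Longrightarrow> 0 \<le> seed_expectation V p X"
  unfolding seed_expectation_def by (intro sum_nonneg mult_nonneg_nonneg seed_weight_nonneg) auto

lemma seed_expectation_Cauchy_Schwarz:
  assumes "0 \<le> p" "p \<le> 1"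
  shows "(seed_expectation V p (\<lambda>S. X S * Y S))\<^sup>2
    \<le> seed_expectation V p (\<lambda>S. (X S)\<^sup>2) * seed_expectation V p (\<lambda>S. (Y S)\<^sup>2)"
proof -
  let ?r = "\<lambda>S. sqrt (seed_weight V p S)"
  have w: "?r S * X S * (?r S * Y S) = seed_weight V p S * (X S * Y S)"
    "(?r S * X S)\<^sup>2 = seed_weight V p S * (X S)\<^sup>2" "(?r S * Y S)\<^sup>2 = seed_weight V p S * (Y S)\<^sup>2" for S
    using seed_weight_nonneg[OF assms, of V S]
    by (simp_all add: power_mult_distrib algebra_simps)
  show ?thesis
    using Cauchy_Schwarz_ineq_sum[of "\<lambda>S. ?r S * X S" "\<lambda>S. ?r S * Y S" "Pow V"]
    unfolding seed_expectation_def w .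
qed

lemma seed_expectation_Cauchy_Schwarz_indicator:
  assumes "0 \<le> p" "p \<le> 1"
  shows "(seed_expectation V p (\<lambda>S. X S * of_bool (Q S)))\<^sup>2
    \<le> seed_expectation V p (\<lambda>S. (X S)\<^sup>2) * seed_expectation V p (\<lambda>S. of_bool (Q S))"
proof -
  have "(\<lambda>S. (of_bool (Q S))\<^sup>2) = (\<lambda>S. of_bool (Q S) :: real)" by (auto intro!: ext)
  then show ?thesis using seed_expectation_Cauchy_Schwarz[OF assms, of V X "\<lambda>S. of_bool (Q S)"] by simp
qed

lemma seed_expectation_second_moment:
  assumes "0 \<le> p" "p \<le> 1" "\<And>S. \<not> Q S \<Longrightarrow> X S = 0"
  shows "(seed_expectation V p X)\<^sup>2
    \<le> seed_expectation V p (\<lambda>S. (X S)\<^sup>2) * seed_expectation V p (\<lambda>S. of_bool (Q S))"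
proof -
  have "(\<lambda>S. X S * of_bool (Q S)) = X" using assms(3) by (auto intro!: ext)
  then show ?thesis using seed_expectation_Cauchy_Schwarz_indicator[OF assms(1,2), of V X Q] by simp
qed

lemma seed_expectation_at_least_two:
  fixes Z :: "'a set \<Rightarrow> nat"
  assumes "finite V" "0 \<le> p" "p \<le> 1" "1 \<le> seed_expectation V p (\<lambda>S. Z S)"
  shows "(seed_expectation V p (\<lambda>S. Z S) - 1)\<^sup>2
    \<le> seed_expectation V p (\<lambda>S. (real (Z S))\<^sup>2) * seed_expectation V p (\<lambda>S. of_bool (2 \<le> Z S))"
proof -
  let ?E = "seed_expectation V p"
  have "real (Z S) - 1 \<le> real (Z S) * of_bool (2 \<le> Z S)" for S
    by (cases "2 \<le> Z S") auto
  then have "?E (\<lambda>S. real (Z S) - 1) \<le> ?E (\<lambda>S. real (Z S) * of_bool (2 \<le> Z S))"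
    by (intro seed_expectation_mono[OF assms(2,3)])
  moreover have "?E (\<lambda>S. real (Z S) - 1) = ?E (\<lambda>S. Z S) - 1"
    using seed_expectation_const[OF assms(1), of p 1]
    by (simp add: seed_expectation_def sum_subtractf right_diff_distrib)
  ultimately have "(?E (\<lambda>S. Z S) - 1)\<^sup>2 \<le> (?E (\<lambda>S. real (Z S) * of_bool (2 \<le> Z S)))\<^sup>2"
    using assms(4) by (intro power_mono) auto
  also have "\<dots> \<le> ?E (\<lambda>S. (real (Z S))\<^sup>2) * ?E (\<lambda>S. of_bool (2 \<le> Z S))"
    by (rule seed_expectation_Cauchy_Schwarz_indicator[OF assms(2,3)])
  finally show ?thesis .
qed

lemma power_card_union:
  fixes p :: real
  assumes "finite A" "finite C"
  shows "p ^ card (C \<union> A) = p ^ card C * (\<Prod>x\<in>A. if x \<in> C then 1 else p)"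
  using assms(1)
proof (induction A rule: finite_induct)
  case (insert x A)
  then have "card (C \<union> insert x A) = (if x \<in> C then card (C \<union> A) else Suc (card (C \<union> A)))"
    using assms(2) by (simp add: card_insert_if)
  with insert show ?case by simp
qed simp

definition pairs :: "nat \<Rightarrow> (nat \<times> nat) set" where
  "pairs d = {(a, b). a < b \<and> b < d}"

lemma finite_pairs [simp]: "finite (pairs d)"
proof (rule finite_subset)
  show "pairs d \<subseteq> {..<d} \<times> {..<d}" by (auto simp: pairs_def)
qed simp

lemma pairs_Suc: "pairs (Suc d) = pairs d \<union> (\<lambda>a. (a, d)) ` {..<d}"
  by (auto simp: pairs_def)

lemma sum_pairs_product:
  fixes g :: "nat \<Rightarrow> real"
  shows "(\<Sum>(a, b)\<in>pairs d. g a * g b) = ((\<Sum>a<d. g a)\<^sup>2 - (\<Sum>a<d. (g a)\<^sup>2)) / 2"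
proof (induction d)
  case (Suc d)
  have "(\<Sum>(a, b)\<in>pairs (Suc d). g a * g b) = (\<Sum>(a, b)\<in>pairs d. g a * g b) + g d * (\<Sum>a<d. g a)"
    unfolding pairs_Suc
    by (subst sum.union_disjoint) (auto simp: pairs_def sum.reindex inj_on_def sum_distrib_left mult.commute
        simp del: finite_pairs intro: finite_pairs[unfolded pairs_def])
  with Suc show ?case by (simp add: power2_eq_square algebra_simps)
qed (simp add: pairs_def)

lemma card_pairs: "real (card (pairs d)) = real d * (real d - 1) / 2"
  using sum_pairs_product[of "\<lambda>_. 1" d] by (simp add: power2_eq_square algebra_simps)

lemma sum_pairs_product_le:
  fixes g :: "nat \<Rightarrow> real"
  assumes "\<And>a. a < d \<Longrightarrow> 0 \<le> g a"
  shows "(\<Sum>(a, b)\<in>pairs d. g a * g b) \<le> (\<Sum>a<d. g a)\<^sup>2 / 2"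
  unfolding sum_pairs_product using assms by (simp add: sum_nonneg)

lemma sum_lessThan_if_mem:
  fixes x y :: real
  assumes "M \<subseteq> {..<d}"
  shows "(\<Sum>l<d. if l \<in> M then x else y) = real (card M) * x + real (d - card M) * y"
proof -
  have "finite M" using assms finite_subset by blast
  moreover have "{..<d} \<inter> M = M" "{..<d} \<inter> - M = {..<d} - M" using assms by auto
  ultimately show ?thesis using assms by (simp add: sum.If_cases card_Diff_subset)
qed

text \<open>The second elementary symmetric polynomial of the multiset with \<open>m\<close> copies of \<open>x\<close>
  and \<open>k\<close> copies of \<open>y\<close>.\<close>
definition esym2 :: "nat \<Rightarrow> real \<Rightarrow> nat \<Rightarrow> real \<Rightarrow> real" where
  "esym2 m x k y = real m * (real m - 1) / 2 * x\<^sup>2 + real m * real k * x * y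
     + real k * (real k - 1) / 2 * y\<^sup>2"

lemma sum_pairs_two_valued:
  assumes "M \<subseteq> {..<d}" "\<And>l. l < d \<Longrightarrow> g l = (if l \<in> M then x else y)"
  shows "(\<Sum>(a, b)\<in>pairs d. g a * g b) = esym2 (card M) x (d - card M) y"
proof -
  have "(\<Sum>a<d. g a) = (\<Sum>a<d. if a \<in> M then x else y)"
    "(\<Sum>a<d. (g a)\<^sup>2) = (\<Sum>a<d. if a \<in> M then x\<^sup>2 else y\<^sup>2)"
    using assms(2) by (auto intro!: sum.cong)
  then show ?thesis
    unfolding sum_pairs_product esym2_def sum_lessThan_if_mem[OF assms(1)] by (simp add: power2_eq_square field_simps)
qed

text \<open>\<open>((j1, j2), (l1, l2), (l3, l4))\<close> encodes the grandchildren \<open>j1 < j2\<close> of a child of the root,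
  the leaves \<open>l1 < l2\<close> below \<open>j1\<close> and the leaves \<open>l3 < l4\<close> below \<open>j2\<close>.\<close>
definition witnesses :: "nat \<Rightarrow> ((nat \<times> nat) \<times> (nat \<times> nat) \<times> (nat \<times> nat)) set" where
  "witnesses d = pairs d \<times> pairs d \<times> pairs d"

lemma finite_witnesses [simp]: "finite (witnesses d)"
  by (simp add: witnesses_def)

lemma card_witnesses: "real (card (witnesses d)) = (real d * (real d - 1) / 2) ^ 3"
  by (simp add: witnesses_def card_cartesian_product card_pairs power3_eq_cube)

lemma sum_witnesses_factor:
  fixes g :: "nat \<Rightarrow> nat \<Rightarrow> real"
  shows "(\<Sum>((j1, j2), (l1, l2), (l3, l4))\<in>witnesses d. g j1 l1 * g j1 l2 * (g j2 l3 * g j2 l4))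
    = (\<Sum>(j1, j2)\<in>pairs d. (\<Sum>(l, l')\<in>pairs d. g j1 l * g j1 l') * (\<Sum>(l, l')\<in>pairs d. g j2 l * g j2 l'))"
  unfolding witnesses_def sum.cartesian_product[symmetric]
  by (intro sum.cong refl) (auto simp: sum_product sum.cartesian_product split_beta)

text \<open>Given a seeded witness, each new leaf of a second witness below the same child is a seed with
  probability \<open>p\<close>. Summed over its leaf pairs, each of the two grandchildren of the first witness
  then contributes \<open>esym2 2 1 (d - 2) p\<close> and every other grandchild \<open>esym2 0 1 d p\<close>.\<close>
definition self_overlap :: "nat \<Rightarrow> real \<Rightarrow> real" where
  "self_overlap d p = esym2 2 (esym2 2 1 (d - 2) p) (d - 2) (esym2 0 1 d p)"

text \<open>For witnesses below any child overlapping a fixed seeded 4-set, the leaf-pair weights of a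
  child's grandchildren sum to at most \<open>overlap_base d p\<close> plus the number of pairs of the 4-set below
  a common grandchild. There are at most 6 such pairs in total, whence the constants 12 and 36.\<close>
definition overlap_base :: "nat \<Rightarrow> real \<Rightarrow> real" where
  "overlap_base d p = real d * (real d * p)\<^sup>2 / 2 + 4 * (real d * p)"

definition cross_overlap :: "nat \<Rightarrow> real \<Rightarrow> real" where
  "cross_overlap d p = (real d * (overlap_base d p)\<^sup>2 + 12 * overlap_base d p + 36) / 2"

lemma esym2_ge_square:
  assumes "0 \<le> x" "0 \<le> y"
  shows "x\<^sup>2 \<le> esym2 2 x k y"
proof -
  have "0 \<le> real k * (real k - 1)" by (cases k) auto
  with assms show ?thesis
    unfolding esym2_def by (simp add: mult_nonneg_nonneg)
qed

lemma one_le_self_overlap: "0 \<le> p \<Longrightarrow> 1 \<le> self_overlap d p"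
proof -
  assume "0 \<le> p"
  have "0 \<le> real d * (real d - 1)" by (cases d) auto
  then have r0: "0 \<le> esym2 0 1 d p" by (simp add: esym2_def)
  have "1 \<le> esym2 2 1 (d - 2) p" using esym2_ge_square[OF _ \<open>0 \<le> p\<close>, of 1] by simp
  then show ?thesis
    using esym2_ge_square[OF _ r0, of "esym2 2 1 (d - 2) p" "d - 2"]
    unfolding self_overlap_def by (smt (verit) one_le_power)
qed

lemma real_choose_two: "real (n choose 2) = real n * (real n - 1) / 2"
proof (induction n)
  case (Suc n)
  have "Suc n choose 2 = n + (n choose 2)"
    by (simp add: numeral_2_eq_2)
  with Suc show ?case by (simp add: algebra_simps)
qed simp

lemma cross_overlap_pos:
  assumes "0 \<le> p"
  shows "0 < cross_overlap d p"
proof -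
  have "0 \<le> overlap_base d p" using assms by (simp add: overlap_base_def)
  then have "0 \<le> real d * (overlap_base d p)\<^sup>2 + 12 * overlap_base d p" by simp
  then show ?thesis unfolding cross_overlap_def by simp
qed

locale proper_3_tree =
  fixes V :: "nat set" and E :: "nat \<Rightarrow> nat \<Rightarrow> bool" and d v :: nat and f :: "nat list \<Rightarrow> nat"
  assumes graph: "fin_graph V E" and tree: "dk_tree E d 3 v f" and proper: "four_proper d 3 f"
begin

lemma finite_V: "finite V"
  using graph by (simp add: fin_graph_def)

lemma edge_in_V: "E x y \<Longrightarrow> x \<in> V"
  using graph by (simp add: fin_graph_def)

lemma edge_neq: "E x y \<Longrightarrow> x \<noteq> y"
  using graph by (auto simp: fin_graph_def)

lemma edge_sym: "E x y \<Longrightarrow> E y x"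
  using graph by (simp add: fin_graph_def)

lemma root_label: "f [] = v"
  using tree by (simp add: dk_tree_def)

lemma
  assumes "length s < 3" "set s \<subseteq> {..<d}"
  shows children_inj: "inj_on (\<lambda>i. f (s @ [i])) {..<d}"
    and child_edge: "i < d \<Longrightarrow> E (f s) (f (s @ [i]))"
    and child_neq_grandparent: "s \<noteq> [] \<Longrightarrow> i < d \<Longrightarrow> f (s @ [i]) \<noteq> f (butlast s)"
  using tree assms by (simp_all add: dk_tree_def)

lemma tree_edge:
  assumes "length s < 3" "set s \<subseteq> {..<d}" "i < d"
  shows "{f s, f (s @ [i])} \<in> tree_edges d 3 f" "{f (s @ [i]), f s} \<in> tree_edges d 3 f"
  using assms unfolding tree_edges_def by (blast, subst insert_commute, blast)

lemma tree_edge_is_edge: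
  assumes "{a, b} \<in> tree_edges d 3 f"
  shows "E a b"
proof -
  obtain s i where e: "{a, b} = {f s, f (s @ [i])}" and s: "length s < 3" "set s \<subseteq> {..<d}" "i < d"
    using assms unfolding tree_edges_def by blast
  have "E (f s) (f (s @ [i]))" using child_edge[OF s] .
  with e show ?thesis unfolding doubleton_eq_iff by (auto intro: edge_sym)
qed

lemma tree_no_C4:
  assumes "x \<noteq> y" "a \<noteq> b" "{x, a} \<in> tree_edges d 3 f" "{a, y} \<in> tree_edges d 3 f"
    "{y, b} \<in> tree_edges d 3 f" "{b, x} \<in> tree_edges d 3 f"
  shows False
proof -
  have "distinct [x, a, y, b]"
    using assms edge_neq[OF tree_edge_is_edge] by auto
  with assms(3-6) proper show False
    unfolding four_proper_def by blast
qed

lemma leaves_inj: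
  assumes "i < d"
  shows "inj_on (\<lambda>(j, l). f [i, j, l]) ({..<d} \<times> {..<d})"
proof (rule inj_onI, clarsimp)
  fix j l j' l' assume jl: "j < d" "l < d" "j' < d" "l' < d" and eq: "f [i, j, l] = f [i, j', l']"
  show "j = j' \<and> l = l'"
  proof (cases "j = j'")
    case True
    then show ?thesis using children_inj[of "[i, j]"] assms jl eq by (auto dest: inj_onD)
  next
    case False
    then have "f [i, j] \<noteq> f [i, j']" using children_inj[of "[i]"] assms jl by (auto dest: inj_onD)
    moreover have "f [i, j, l] \<noteq> f [i]" using child_neq_grandparent[of "[i, j]" l] assms jl by simp
    ultimately show ?thesis
      using tree_no_C4[of "f [i, j, l]" "f [i]" "f [i, j]" "f [i, j']"] eq assms jl
        tree_edge[of "[i, j]" l] tree_edge[of "[i]" j] tree_edge[of "[i]" j'] tree_edge[of "[i, j']" l']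
      by simp
  qed
qed

lemma grandchildren_inj: "inj_on (\<lambda>(i, j). f [i, j]) ({..<d} \<times> {..<d})"
proof (rule inj_onI, clarsimp)
  fix i j i' j' assume ij: "i < d" "j < d" "i' < d" "j' < d" and eq: "f [i, j] = f [i', j']"
  show "i = i' \<and> j = j'"
  proof (cases "i = i'")
    case True
    then show ?thesis using children_inj[of "[i]"] ij eq by (auto dest: inj_onD)
  next
    case False
    then have "f [i] \<noteq> f [i']" using children_inj[of "[]"] ij by (auto dest: inj_onD)
    moreover have "f [i, j] \<noteq> v" using child_neq_grandparent[of "[i]" j] ij root_label by simp
    ultimately show ?thesis
      using tree_no_C4[of "f [i, j]" v "f [i]" "f [i']"] eq ij root_label
        tree_edge[of "[i]" j] tree_edge[of "[]" i] tree_edge[of "[]" i'] tree_edge[of "[i']" j']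
      by simp
  qed
qed

lemma leaf_pair_determines_grandchild:
  assumes "i < d" "j < d" "i' < d" "j' < d" "x \<noteq> y"
    and "{x, y} \<subseteq> (\<lambda>l. f [i, j, l]) ` {..<d}" "{x, y} \<subseteq> (\<lambda>l. f [i', j', l]) ` {..<d}"
  shows "i = i' \<and> j = j'"
proof (rule ccontr)
  assume "\<not> (i = i' \<and> j = j')"
  then have "f [i, j] \<noteq> f [i', j']"
    using inj_onD[OF grandchildren_inj, of "(i, j)" "(i', j')"] assms(1-4) by auto
  moreover obtain l1 l2 where "l1 < d" "l2 < d" "x = f [i, j, l1]" "y = f [i, j, l2]"
    using assms(6) by auto
  moreover obtain l3 l4 where "l3 < d" "l4 < d" "x = f [i', j', l3]" "y = f [i', j', l4]"
    using assms(7) by auto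
  ultimately show False
    using tree_no_C4[of x y "f [i, j]" "f [i', j']"] assms(1-5)
      tree_edge[of "[i, j]" l1] tree_edge[of "[i, j]" l2] tree_edge[of "[i', j']" l3]
      tree_edge[of "[i', j']" l4]
    by simp
qed

lemma boot_SucI:
  assumes "x \<noteq> y" "E u x" "E u y" "x \<in> boot V E A k" "y \<in> boot V E A k"
  shows "u \<in> boot V E A (Suc k)"
proof -
  have "nbhd E u \<subseteq> V" unfolding nbhd_def using edge_in_V edge_sym by blast
  then have "finite (nbhd E u \<inter> boot V E A k)" using finite_V by (meson finite_Int finite_subset)
  moreover have "{x, y} \<subseteq> nbhd E u \<inter> boot V E A k" using assms unfolding nbhd_def by auto
  ultimately have "2 \<le> card (nbhd E u \<inter> boot V E A k)"
    using assms(1) card_mono[of _ "{x, y}"] by fastforce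
  then show ?thesis using edge_in_V[OF assms(2)] by auto
qed

fun witness_leaves :: "nat \<Rightarrow> (nat \<times> nat) \<times> (nat \<times> nat) \<times> (nat \<times> nat) \<Rightarrow> nat set" where
  "witness_leaves i ((j1, j2), (l1, l2), (l3, l4)) = {f [i, j1, l1], f [i, j1, l2], f [i, j2, l3], f [i, j2, l4]}"

lemma finite_witness_leaves [simp]: "finite (witness_leaves i w)"
  by (induct i w rule: witness_leaves.induct) simp

lemma leaf_in_V: "i < d \<Longrightarrow> j < d \<Longrightarrow> l < d \<Longrightarrow> f [i, j, l] \<in> V"
  using child_edge[of "[i, j]" l] by (simp add: edge_in_V[OF edge_sym])

lemma leaf_eq_iff:
  "i < d \<Longrightarrow> j < d \<Longrightarrow> l < d \<Longrightarrow> j' < d \<Longrightarrow> l' < d \<Longrightarrow>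
    f [i, j, l] = f [i, j', l'] \<longleftrightarrow> j = j' \<and> l = l'"
  using inj_on_eq_iff[OF leaves_inj, of i "(j, l)" "(j', l')"] by auto

lemma witness_bounds:
  "((j1, j2), (l1, l2), (l3, l4)) \<in> witnesses d \<Longrightarrow>
    j1 < j2 \<and> j2 < d \<and> l1 < l2 \<and> l2 < d \<and> l3 < l4 \<and> l4 < d"
  by (simp add: witnesses_def pairs_def)

lemma mem_witness_leaves:
  assumes "i < d" "((j1, j2), (l1, l2), (l3, l4)) \<in> witnesses d" "j < d" "l < d"
  shows "f [i, j, l] \<in> witness_leaves i ((j1, j2), (l1, l2), (l3, l4))
    \<longleftrightarrow> (j, l) \<in> {(j1, l1), (j1, l2), (j2, l3), (j2, l4)}"
  using assms witness_bounds[OF assms(2)] by (simp add: leaf_eq_iff)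

lemma witness_leaves_distinct:
  assumes "i < d" "((j1, j2), (l1, l2), (l3, l4)) \<in> witnesses d"
  shows "distinct [f [i, j1, l1], f [i, j1, l2], f [i, j2, l3], f [i, j2, l4]]"
  using assms witness_bounds[OF assms(2)] by (simp add: leaf_eq_iff)

lemma card_witness_leaves: "i < d \<Longrightarrow> w \<in> witnesses d \<Longrightarrow> card (witness_leaves i w) = 4"
  by (cases w) (auto dest!: witness_leaves_distinct)

lemma witness_leaves_subset: "i < d \<Longrightarrow> w \<in> witnesses d \<Longrightarrow> witness_leaves i w \<subseteq> V"
  by (cases w) (auto dest!: witness_bounds simp: leaf_in_V)

definition witness_count :: "nat \<Rightarrow> nat set \<Rightarrow> real" where
  "witness_count i S = (\<Sum>w\<in>witnesses d. of_bool (witness_leaves i w \<subseteq> S))"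

definition has_witness :: "nat \<Rightarrow> nat set \<Rightarrow> bool" where
  "has_witness i S \<longleftrightarrow> (\<exists>w\<in>witnesses d. witness_leaves i w \<subseteq> S)"

definition witnessed_children :: "nat set \<Rightarrow> nat" where
  "witnessed_children S = card {i. i < d \<and> has_witness i S}"

lemma has_witness_boot:
  assumes "i < d" "has_witness i S"
  shows "f [i] \<in> boot V E S 2"
proof -
  obtain j1 j2 l1 l2 l3 l4 where w: "((j1, j2), (l1, l2), (l3, l4)) \<in> witnesses d"
    and seeds: "witness_leaves i ((j1, j2), (l1, l2), (l3, l4)) \<subseteq> S"
    using assms(2) unfolding has_witness_def by auto
  note b = witness_bounds[OF w] and dist = witness_leaves_distinct[OF assms(1) w]
  have level1: "f [i, j] \<in> boot V E S (Suc 0)"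
    if "j < d" "l < d" "l' < d" "f [i, j, l] \<noteq> f [i, j, l']" "f [i, j, l] \<in> S" "f [i, j, l'] \<in> S"
    for j l l'
  proof (rule boot_SucI[OF that(4)])
    show "E (f [i, j]) (f [i, j, l])" "E (f [i, j]) (f [i, j, l'])"
      using child_edge[of "[i, j]"] assms(1) that(1-3) by simp_all
  qed (use that(5,6) in simp_all)
  show ?thesis
    unfolding numeral_2_eq_2
  proof (rule boot_SucI)
    show "f [i, j1] \<noteq> f [i, j2]"
      using b assms(1) inj_onD[OF children_inj[of "[i]"], of j1 j2] by auto
    show "E (f [i]) (f [i, j1])" "E (f [i]) (f [i, j2])"
      using child_edge[of "[i]"] assms(1) b by simp_all
    show "f [i, j1] \<in> boot V E S (Suc 0)"
      by (rule level1[of j1 l1 l2]) (use b dist seeds in auto)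
    show "f [i, j2] \<in> boot V E S (Suc 0)"
      by (rule level1[of j2 l3 l4]) (use b dist seeds in auto)
  qed
qed

lemma activated_if_two_witnessed:
  assumes "2 \<le> witnessed_children S"
  shows "activated V E S v"
proof -
  obtain T where "T \<subseteq> {i. i < d \<and> has_witness i S}" "card T = 2"
    using assms obtain_subset_with_card_n unfolding witnessed_children_def by metis
  then obtain i i' where i: "i < d" "has_witness i S" and i': "i' < d" "has_witness i' S"
    and "i \<noteq> i'"
    by (auto simp: card_2_iff)
  have "v \<in> boot V E S (Suc 2)"
  proof (rule boot_SucI)
    show "f [i] \<noteq> f [i']" using inj_onD[OF children_inj[of "[]"], of i i'] i i' \<open>i \<noteq> i'\<close> by auto
    show "E v (f [i])" "E v (f [i'])" using child_edge[of "[]"] root_label i i' by simp_all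
    show "f [i] \<in> boot V E S 2" "f [i'] \<in> boot V E S 2"
      using has_witness_boot i i' by simp_all
  qed
  then show ?thesis unfolding activated_def by blast
qed

lemma real_witnessed_children: "real (witnessed_children S) = (\<Sum>i<d. of_bool (has_witness i S))"
  by (simp add: witnessed_children_def Int_def)

lemma witness_count_eq_0: "\<not> has_witness i S \<Longrightarrow> witness_count i S = 0"
  by (auto simp: witness_count_def has_witness_def)

lemma witness_count_nonneg: "0 \<le> witness_count i S"
  by (simp add: witness_count_def sum_nonneg)

lemma has_witness_le_witness_count: "of_bool (has_witness i S) \<le> witness_count i S"
proof (cases "has_witness i S")
  case True
  then obtain w where "w \<in> witnesses d" "witness_leaves i w \<subseteq> S" unfolding has_witness_def by blast
  then have "of_bool (witness_leaves i w \<subseteq> S) \<le> witness_count i S"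
    unfolding witness_count_def by (intro member_le_sum) auto
  with True \<open>witness_leaves i w \<subseteq> S\<close> show ?thesis by simp
qed (simp add: witness_count_nonneg)

end

locale seeded_proper_3_tree = proper_3_tree +
  fixes p :: real
  assumes p_nonneg: "0 \<le> p" and p_le_1: "p \<le> 1"
begin

abbreviation expect :: "(nat set \<Rightarrow> real) \<Rightarrow> real" where
  "expect \<equiv> seed_expectation V p"

definition seed_prob_given :: "nat set \<Rightarrow> nat \<Rightarrow> real" where
  "seed_prob_given B x = (if x \<in> B then 1 else p)"

definition leaves_in :: "nat set \<Rightarrow> nat \<Rightarrow> nat \<Rightarrow> nat set" where
  "leaves_in B i j = {l. l < d \<and> f [i, j, l] \<in> B}"

definition pair_weight :: "nat set \<Rightarrow> nat \<Rightarrow> nat \<Rightarrow> real" where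
  "pair_weight B i j = (\<Sum>(l, l')\<in>pairs d. seed_prob_given B (f [i, j, l]) * seed_prob_given B (f [i, j, l']))"

lemma pair_weight_eq_esym2:
  "pair_weight B i j = esym2 (card (leaves_in B i j)) 1 (d - card (leaves_in B i j)) p"
  unfolding pair_weight_def
  by (rule sum_pairs_two_valued) (auto simp: leaves_in_def seed_prob_given_def)

lemma expect_witness_count:
  assumes "i < d"
  shows "expect (witness_count i) = p ^ 4 * card (witnesses d)"
proof -
  have "expect (witness_count i) = (\<Sum>w\<in>witnesses d. p ^ card (witness_leaves i w))"
    unfolding witness_count_def seed_expectation_sum
    using seed_expectation_subset[OF finite_V witness_leaves_subset[OF assms]] by simp
  also have "\<dots> = (\<Sum>w\<in>witnesses d. p ^ 4)"
    using card_witness_leaves[OF assms] by simp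
  finally show ?thesis by simp
qed

lemma expect_witness_count_product:
  assumes "i < d" "i' < d"
  shows "expect (\<lambda>S. witness_count i S * witness_count i' S)
    = (\<Sum>w\<in>witnesses d. \<Sum>w'\<in>witnesses d. p ^ card (witness_leaves i w \<union> witness_leaves i' w'))"
proof -
  have "(\<lambda>S. witness_count i S * witness_count i' S)
    = (\<lambda>S. \<Sum>w\<in>witnesses d. \<Sum>w'\<in>witnesses d. of_bool (witness_leaves i w \<union> witness_leaves i' w' \<subseteq> S))"
    unfolding witness_count_def sum_product by (intro ext sum.cong refl) simp
  then have "expect (\<lambda>S. witness_count i S * witness_count i' S)
    = (\<Sum>w\<in>witnesses d. \<Sum>w'\<in>witnesses d. expect (\<lambda>S. of_bool (witness_leaves i w \<union> witness_leaves i' w' \<subseteq> S)))"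
    by (simp only: seed_expectation_sum)
  also have "\<dots> = (\<Sum>w\<in>witnesses d. \<Sum>w'\<in>witnesses d. p ^ card (witness_leaves i w \<union> witness_leaves i' w'))"
    by (intro sum.cong refl seed_expectation_subset[OF finite_V]) (auto simp: assms witness_leaves_subset)
  finally show ?thesis .
qed

lemma sum_witnesses_overlap:
  assumes "i' < d" "finite B"
  shows "(\<Sum>w'\<in>witnesses d. p ^ card (B \<union> witness_leaves i' w'))
    = p ^ card B * (\<Sum>(j1, j2)\<in>pairs d. pair_weight B i' j1 * pair_weight B i' j2)"
proof -
  define g where "g j l = seed_prob_given B (f [i', j, l])" for j l
  define h where "h = (\<lambda>((j1, j2), (l1, l2), (l3, l4)). g j1 l1 * g j1 l2 * (g j2 l3 * g j2 l4))"
  have "p ^ card (B \<union> witness_leaves i' w') = p ^ card B * h w'" if "w' \<in> witnesses d" for w'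
  proof -
    obtain j1 j2 l1 l2 l3 l4 where w': "w' = ((j1, j2), (l1, l2), (l3, l4))" by (metis prod.collapse)
    have "p ^ card (B \<union> witness_leaves i' w') = p ^ card B * (\<Prod>x\<in>witness_leaves i' w'. seed_prob_given B x)"
      unfolding seed_prob_given_def w' by (rule power_card_union) (simp_all add: assms(2))
    also have "(\<Prod>x\<in>witness_leaves i' w'. seed_prob_given B x) = h w'"
      using witness_leaves_distinct[OF assms(1) that[unfolded w']] by (simp add: w' h_def g_def mult_ac)
    finally show ?thesis .
  qed
  then have "(\<Sum>w'\<in>witnesses d. p ^ card (B \<union> witness_leaves i' w')) = p ^ card B * sum h (witnesses d)"
    by (simp add: sum_distrib_left)
  also have "sum h (witnesses d) = (\<Sum>(j1, j2)\<in>pairs d. pair_weight B i' j1 * pair_weight B i' j2)"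
    unfolding h_def sum_witnesses_factor pair_weight_def g_def ..
  finally show ?thesis .
qed

lemma leaves_in_own_witness:
  assumes "i < d" "((j1, j2), (l1, l2), (l3, l4)) \<in> witnesses d" "j < d"
  shows "leaves_in (witness_leaves i ((j1, j2), (l1, l2), (l3, l4))) i j
    = (if j = j1 then {l1, l2} else if j = j2 then {l3, l4} else {})"
  using mem_witness_leaves[OF assms(1,2,3)] witness_bounds[OF assms(2)]
  unfolding leaves_in_def by auto

lemma expect_witness_count_sq:
  assumes "i < d"
  shows "expect (\<lambda>S. (witness_count i S)\<^sup>2) = p ^ 4 * card (witnesses d) * self_overlap d p"
proof -
  have "(\<Sum>w'\<in>witnesses d. p ^ card (witness_leaves i w \<union> witness_leaves i w')) = p ^ 4 * self_overlap d p"
    if w: "w \<in> witnesses d" for w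
  proof -
    obtain j1 j2 l1 l2 l3 l4 where w_eq: "w = ((j1, j2), (l1, l2), (l3, l4))" by (metis prod.collapse)
    note b = witness_bounds[OF w[unfolded w_eq]]
    have "pair_weight (witness_leaves i w) i j
        = (if j \<in> {j1, j2} then esym2 2 1 (d - 2) p else esym2 0 1 d p)" if "j < d" for j
      using leaves_in_own_witness[OF assms w[unfolded w_eq] that] b
      unfolding pair_weight_eq_esym2 w_eq by (auto simp: numeral_2_eq_2)
    then have "(\<Sum>(a, b)\<in>pairs d. pair_weight (witness_leaves i w) i a * pair_weight (witness_leaves i w) i b)
        = self_overlap d p"
      using sum_pairs_two_valued[of "{j1, j2}" d] b unfolding self_overlap_def by (simp add: numeral_2_eq_2)
    then show ?thesis
      using sum_witnesses_overlap[OF assms, of "witness_leaves i w"] card_witness_leaves[OF assms w]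
      by (simp add: w_eq)
  qed
  then show ?thesis
    using expect_witness_count_product[OF assms assms] by (simp add: power2_eq_square)
qed

lemma witnessed_child_prob:
  assumes "i < d"
  shows "p ^ 4 * card (witnesses d) \<le> self_overlap d p * expect (\<lambda>S. of_bool (has_witness i S))"
proof -
  let ?m = "p ^ 4 * card (witnesses d)" and ?P = "expect (\<lambda>S. of_bool (has_witness i S))"
  have "(expect (witness_count i))\<^sup>2 \<le> expect (\<lambda>S. (witness_count i S)\<^sup>2) * ?P"
    by (rule seed_expectation_second_moment[OF p_nonneg p_le_1]) (rule witness_count_eq_0)
  then have m2: "?m\<^sup>2 \<le> ?m * self_overlap d p * ?P"
    by (simp add: expect_witness_count expect_witness_count_sq assms)
  have P: "0 \<le> ?P" by (rule seed_expectation_nonneg[OF p_nonneg p_le_1]) simp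
  have m: "0 \<le> ?m" using p_nonneg by simp
  have Q: "1 \<le> self_overlap d p" by (rule one_le_self_overlap[OF p_nonneg])
  show ?thesis
  proof (cases "?m = 0")
    case False
    with m have "0 < ?m" by (metis le_neq_trans)
    have "?m * ?m \<le> ?m * (self_overlap d p * ?P)"
      using m2 by (simp only: power2_eq_square mult.assoc)
    then show ?thesis by (simp only: mult_le_cancel_left_pos[OF \<open>0 < ?m\<close>])
  next
    case True
    have "0 \<le> self_overlap d p * ?P" using P Q by simp
    then show ?thesis by (simp only: True)
  qed
qed

lemma leaves_in_subset: "leaves_in B i j \<subseteq> {..<d}"
  by (auto simp: leaves_in_def)

lemma sum_card_leaves_in:
  assumes "i < d" "finite B"
  shows "(\<Sum>j<d. card (leaves_in B i j)) \<le> card B"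
proof -
  have "(\<Sum>j<d. card (leaves_in B i j)) = card (SIGMA j:{..<d}. leaves_in B i j)"
    by (rule card_SigmaI[symmetric]) (auto simp: leaves_in_def)
  also have "\<dots> \<le> card B"
  proof (rule card_inj_on_le[OF _ _ assms(2)])
    show "inj_on (\<lambda>(j, l). f [i, j, l]) (SIGMA j:{..<d}. leaves_in B i j)"
      by (rule inj_on_subset[OF leaves_inj[OF assms(1)]]) (auto simp: leaves_in_def)
  qed (auto simp: leaves_in_def)
  finally show ?thesis .
qed

text \<open>Two distinct leaves have at most one common parent, so the pairs of elements of \<open>B\<close> lying
  below a common grandchild are distinct for distinct grandchildren.\<close>
lemma sum_choose2_leaves_in:
  assumes "finite B"
  shows "(\<Sum>i<d. \<Sum>j<d. card (leaves_in B i j) choose 2) \<le> card B choose 2"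
proof -
  define pairs_in where "pairs_in A = {e. e \<subseteq> A \<and> card e = 2}" for A :: "nat set"
  define N where "N ij = (\<lambda>l. f [fst ij, snd ij, l]) ` leaves_in B (fst ij) (snd ij)" for ij
  have card_N: "card (N (i, j)) = card (leaves_in B i j)" if "i < d" "j < d" for i j
  proof -
    have "inj_on (\<lambda>l. f [i, j, l]) {..<d}" using children_inj[of "[i, j]"] that by simp
    then show ?thesis
      unfolding N_def fst_conv snd_conv by (intro card_image inj_on_subset[OF _ leaves_in_subset])
  qed
  have N_leaves: "N (i, j) \<subseteq> (\<lambda>l. f [i, j, l]) ` {..<d}" for i j
    unfolding N_def by (simp add: image_mono leaves_in_subset)
  have N_sub: "N ij \<subseteq> B" for ij by (auto simp: N_def leaves_in_def)
  then have fin_N: "finite (N ij)" for ij using assms finite_subset by blast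
  have "(\<Sum>i<d. \<Sum>j<d. card (leaves_in B i j) choose 2) = (\<Sum>ij\<in>{..<d} \<times> {..<d}. card (pairs_in (N ij)))"
    unfolding sum.cartesian_product pairs_in_def
    by (intro sum.cong refl) (auto simp: n_subsets fin_N card_N)
  also have "\<dots> = card (SIGMA ij:{..<d} \<times> {..<d}. pairs_in (N ij))"
    by (rule card_SigmaI[symmetric]) (auto simp: pairs_in_def fin_N)
  also have "\<dots> \<le> card (pairs_in B)"
  proof (rule card_inj_on_le)
    show "snd ` (SIGMA ij:{..<d} \<times> {..<d}. pairs_in (N ij)) \<subseteq> pairs_in B"
      using N_sub by (force simp: pairs_in_def)
    show "finite (pairs_in B)" using assms by (simp add: pairs_in_def)
    show "inj_on snd (SIGMA ij:{..<d} \<times> {..<d}. pairs_in (N ij))"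
    proof (rule inj_onI, clarsimp simp: pairs_in_def)
      fix i j i' j' e
      assume ij: "i < d" "j < d" "i' < d" "j' < d"
        and e: "e \<subseteq> N (i, j)" "e \<subseteq> N (i', j')" "card e = 2"
      then obtain x y where xy: "e = {x, y}" "x \<noteq> y" by (meson card_2_iff)
      show "i = i' \<and> j = j'"
        using leaf_pair_determines_grandchild[OF ij xy(2)]
          subset_trans[OF e(1) N_leaves] subset_trans[OF e(2) N_leaves]
        unfolding xy(1) by blast
    qed
  qed
  also have "card (pairs_in B) = card B choose 2"
    using assms by (simp add: pairs_in_def n_subsets)
  finally show ?thesis .
qed

lemma pair_weight_nonneg: "0 \<le> pair_weight B i j"
  unfolding pair_weight_def seed_prob_given_def using p_nonneg by (intro sum_nonneg) auto

lemma pair_weight_le: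
  fixes B i j
  defines "m \<equiv> card (leaves_in B i j)"
  shows "pair_weight B i j \<le> (real d * p)\<^sup>2 / 2 + real d * p * m + real (m choose 2)"
proof -
  have "m \<le> d" unfolding m_def using card_mono[OF finite_lessThan leaves_in_subset] by simp
  define k where "k = real (d - m)"
  have k: "0 \<le> k" "k \<le> real d" unfolding k_def by simp_all
  have "k * (k - 1) \<le> k * k" using k(1) by (simp add: mult_left_mono)
  also have "\<dots> \<le> real d * real d" using mult_mono[OF k(2) k(2)] k(1) by simp
  finally have quadratic: "k * (k - 1) * p\<^sup>2 \<le> real d * real d * p\<^sup>2" by (simp add: mult_right_mono)
  have linear: "real m * k * 1 * p \<le> real d * p * m"
    using mult_right_mono[OF k(2), of "real m * p"] p_nonneg by (simp add: mult_ac)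
  have "pair_weight B i j = real m * (real m - 1) / 2 * 1\<^sup>2 + real m * k * 1 * p + k * (k - 1) / 2 * p\<^sup>2"
    unfolding pair_weight_eq_esym2 esym2_def m_def k_def ..
  moreover have "real m * (real m - 1) / 2 * 1\<^sup>2 = real (m choose 2)" by (simp add: real_choose_two)
  moreover have "(real d * p)\<^sup>2 = real d * real d * p\<^sup>2" by (simp add: power2_eq_square)
  moreover have "k * (k - 1) / 2 * p\<^sup>2 = k * (k - 1) * p\<^sup>2 / 2" by simp
  ultimately show ?thesis using quadratic linear by linarith
qed

lemma sum_pair_weight_le:
  assumes "i < d" "finite B" "card B \<le> 4"
  shows "(\<Sum>j<d. pair_weight B i j) \<le> overlap_base d p + (\<Sum>j<d. real (card (leaves_in B i j) choose 2))"
proof -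
  have "(\<Sum>j<d. pair_weight B i j)
      \<le> (\<Sum>j<d. (real d * p)\<^sup>2 / 2 + real d * p * card (leaves_in B i j) + real (card (leaves_in B i j) choose 2))"
    by (intro sum_mono pair_weight_le)
  also have "\<dots> = real d * (real d * p)\<^sup>2 / 2 + real d * p * (\<Sum>j<d. card (leaves_in B i j))
      + (\<Sum>j<d. real (card (leaves_in B i j) choose 2))"
    by (simp add: sum.distrib sum_distrib_left)
  also have "\<dots> \<le> overlap_base d p + (\<Sum>j<d. real (card (leaves_in B i j) choose 2))"
  proof -
    have "real (\<Sum>j<d. card (leaves_in B i j)) \<le> 4"
      using sum_card_leaves_in[OF assms(1,2)] assms(3) by linarith
    then have "real d * p * real (\<Sum>j<d. card (leaves_in B i j)) \<le> real d * p * 4"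
      using p_nonneg by (intro mult_left_mono) auto
    then show ?thesis by (simp add: overlap_base_def)
  qed
  finally show ?thesis .
qed

lemma sum_pair_products_le:
  assumes "finite B" "card B = 4"
  shows "(\<Sum>i<d. \<Sum>(a, b)\<in>pairs d. pair_weight B i a * pair_weight B i b) \<le> cross_overlap d p"
proof -
  let ?c = "overlap_base d p"
  define K where "K i = (\<Sum>j<d. real (card (leaves_in B i j) choose 2))" for i
  have K_nonneg: "0 \<le> K i" for i unfolding K_def by (simp add: sum_nonneg)
  have sum_K: "(\<Sum>i<d. K i) \<le> 6"
    using sum_choose2_leaves_in[OF assms(1)] assms(2) unfolding K_def
    by (simp add: choose_two flip: of_nat_sum)
  have K_le: "K i \<le> 6" if "i < d" for i
    using sum_K member_le_sum[of i "{..<d}" K] K_nonneg that by fastforce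
  have c_nonneg: "0 \<le> ?c" using p_nonneg by (simp add: overlap_base_def)
  have "(\<Sum>(a, b)\<in>pairs d. pair_weight B i a * pair_weight B i b) \<le> (?c + K i)\<^sup>2 / 2" if "i < d" for i
  proof -
    have "(\<Sum>(a, b)\<in>pairs d. pair_weight B i a * pair_weight B i b) \<le> (\<Sum>j<d. pair_weight B i j)\<^sup>2 / 2"
      by (rule sum_pairs_product_le) (rule pair_weight_nonneg)
    also have "\<dots> \<le> (?c + K i)\<^sup>2 / 2"
      using sum_pair_weight_le[OF that assms(1)] assms(2) pair_weight_nonneg
      by (simp add: K_def power_mono sum_nonneg)
    finally show ?thesis .
  qed
  then have "(\<Sum>i<d. \<Sum>(a, b)\<in>pairs d. pair_weight B i a * pair_weight B i b) \<le> (\<Sum>i<d. (?c + K i)\<^sup>2 / 2)"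
    by (intro sum_mono) simp
  also have "\<dots> \<le> (\<Sum>i<d. (?c\<^sup>2 + 2 * ?c * K i + 6 * K i) / 2)"
  proof (intro sum_mono divide_right_mono)
    fix i assume "i \<in> {..<d}"
    then have "K i * K i \<le> 6 * K i" using mult_right_mono[OF K_le K_nonneg] by simp
    moreover have "(?c + K i)\<^sup>2 = ?c\<^sup>2 + 2 * ?c * K i + K i * K i" by (simp add: power2_eq_square algebra_simps)
    ultimately show "(?c + K i)\<^sup>2 \<le> ?c\<^sup>2 + 2 * ?c * K i + 6 * K i" by linarith
  qed simp
  also have "\<dots> = (\<Sum>i<d. ?c\<^sup>2 / 2 + (?c + 3) * K i)"
    by (intro sum.cong) (simp_all add: field_simps)
  also have "\<dots> = real d * ?c\<^sup>2 / 2 + (?c + 3) * (\<Sum>i<d. K i)"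
    by (simp add: sum.distrib sum_distrib_left)
  also have "\<dots> \<le> real d * ?c\<^sup>2 / 2 + (?c + 3) * 6"
    using sum_K c_nonneg by (intro add_left_mono mult_left_mono) auto
  also have "\<dots> = cross_overlap d p"
    by (simp add: cross_overlap_def field_simps)
  finally show ?thesis .
qed

lemma expect_witnessed_children_sq:
  "expect (\<lambda>S. (real (witnessed_children S))\<^sup>2) \<le> real d * (p ^ 4 * card (witnesses d)) * cross_overlap d p"
proof -
  let ?W = "witnesses d" and ?L = witness_leaves
  have "(real (witnessed_children S))\<^sup>2 \<le> (\<Sum>i<d. \<Sum>i'<d. witness_count i S * witness_count i' S)" for S
  proof -
    have "(real (witnessed_children S))\<^sup>2 = (\<Sum>i<d. \<Sum>i'<d. of_bool (has_witness i S) * of_bool (has_witness i' S))"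
      unfolding real_witnessed_children power2_eq_square sum_product ..
    also have "\<dots> \<le> (\<Sum>i<d. \<Sum>i'<d. witness_count i S * witness_count i' S)"
      by (intro sum_mono mult_mono has_witness_le_witness_count witness_count_nonneg) auto
    finally show ?thesis .
  qed
  then have "expect (\<lambda>S. (real (witnessed_children S))\<^sup>2)
      \<le> expect (\<lambda>S. \<Sum>i<d. \<Sum>i'<d. witness_count i S * witness_count i' S)"
    by (intro seed_expectation_mono[OF p_nonneg p_le_1])
  also have "\<dots> = (\<Sum>i<d. \<Sum>i'<d. expect (\<lambda>S. witness_count i S * witness_count i' S))"
    by (simp only: seed_expectation_sum)
  also have "\<dots> = (\<Sum>i<d. \<Sum>w\<in>?W. \<Sum>i'<d. \<Sum>w'\<in>?W. p ^ card (?L i w \<union> ?L i' w'))"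
    by (intro sum.cong refl) (simp add: expect_witness_count_product sum.swap[of _ "{..<d}"])
  also have "\<dots> = (\<Sum>i<d. \<Sum>w\<in>?W. p ^ 4 * (\<Sum>i'<d. \<Sum>(a, b)\<in>pairs d. pair_weight (?L i w) i' a * pair_weight (?L i w) i' b))"
    by (intro sum.cong refl)
      (simp add: sum_distrib_left sum_witnesses_overlap card_witness_leaves)
  also have "\<dots> \<le> (\<Sum>i<d. \<Sum>w\<in>?W. p ^ 4 * cross_overlap d p)"
    using p_nonneg card_witness_leaves
    by (intro sum_mono mult_left_mono sum_pair_products_le) auto
  also have "\<dots> = real d * (p ^ 4 * card ?W) * cross_overlap d p"
    by simp
  finally show ?thesis .
qed

lemma expect_witnessed_children_ge:
  "real d * (p ^ 4 * card (witnesses d)) / self_overlap d p \<le> expect (\<lambda>S. real (witnessed_children S))"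
proof -
  have Q: "0 < self_overlap d p" using one_le_self_overlap[OF p_nonneg, of d] by linarith
  have "real d * (p ^ 4 * card (witnesses d)) / self_overlap d p
      = (\<Sum>i<d. p ^ 4 * card (witnesses d) / self_overlap d p)"
    by simp
  also have "\<dots> \<le> (\<Sum>i<d. expect (\<lambda>S. of_bool (has_witness i S)))"
    using witnessed_child_prob Q by (intro sum_mono) (simp add: divide_le_eq mult.commute)
  also have "\<dots> = expect (\<lambda>S. real (witnessed_children S))"
    unfolding real_witnessed_children seed_expectation_sum ..
  finally show ?thesis .
qed

lemma half_le_prob_activated:
  assumes "1 \<le> real d * (p ^ 4 * card (witnesses d)) / self_overlap d p"
    and "real d * (p ^ 4 * card (witnesses d)) * cross_overlap d p
      \<le> 2 * (real d * (p ^ 4 * card (witnesses d)) / self_overlap d p - 1)\<^sup>2"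
  shows "1 / 2 \<le> prob_activated V E p v"
proof -
  let ?\<mu> = "real d * (p ^ 4 * card (witnesses d))" and ?Q = "self_overlap d p" and ?U = "cross_overlap d p"
  let ?EZ = "expect (\<lambda>S. real (witnessed_children S))"
  let ?P2 = "expect (\<lambda>S. of_bool (2 \<le> witnessed_children S))"
  have P2_nonneg: "0 \<le> ?P2" by (rule seed_expectation_nonneg[OF p_nonneg p_le_1]) simp
  have "0 < ?\<mu>" using assms(1) one_le_self_overlap[OF p_nonneg]
    by (smt (verit) divide_le_0_iff)
  then have \<mu>U: "0 < ?\<mu> * ?U" using cross_overlap_pos[OF p_nonneg] by simp
  have EZ: "?\<mu> / ?Q \<le> ?EZ" by (rule expect_witnessed_children_ge)
  have "(?\<mu> / ?Q - 1)\<^sup>2 \<le> (?EZ - 1)\<^sup>2"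
    using EZ assms(1) by (intro power_mono) auto
  also have "\<dots> \<le> expect (\<lambda>S. (real (witnessed_children S))\<^sup>2) * ?P2"
    using EZ assms(1) by (intro seed_expectation_at_least_two[OF finite_V p_nonneg p_le_1]) auto
  also have "\<dots> \<le> ?\<mu> * ?U * ?P2"
    using expect_witnessed_children_sq P2_nonneg by (intro mult_right_mono) auto
  finally have "?\<mu> * ?U * 1 \<le> ?\<mu> * ?U * (2 * ?P2)" using assms(2) by simp
  then have "1 / 2 \<le> ?P2" using \<mu>U by (simp only: mult_le_cancel_left_pos)
  also have "?P2 \<le> prob_activated V E p v"
    unfolding prob_activated_eq_seed_expectation
    using activated_if_two_witnessed by (intro seed_expectation_mono[OF p_nonneg p_le_1]) simp
  finally show ?thesis .
qed

end

lemma esym2_two_le: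
  assumes "0 \<le> x" "0 \<le> y"
  shows "esym2 2 x k y \<le> (x + real k * y)\<^sup>2"
proof -
  have "real k * (real k - 1) / 2 \<le> real k * real k" by (cases k) (auto simp: field_simps)
  then have "real k * (real k - 1) / 2 * y\<^sup>2 \<le> real k * real k * y\<^sup>2" by (rule mult_right_mono) simp
  also have "\<dots> = (real k * y)\<^sup>2" by (simp add: power2_eq_square)
  finally have "real k * (real k - 1) / 2 * y\<^sup>2 \<le> (real k * y)\<^sup>2" .
  then show ?thesis
    unfolding esym2_def power2_sum by (simp add: mult_ac)
qed

lemma self_overlap_le:
  assumes "0 \<le> p"
  shows "self_overlap d p \<le> ((1 + real d * p)\<^sup>2 + real d * (real d * p)\<^sup>2 / 2)\<^sup>2"
proof -
  let ?r1 = "esym2 2 1 (d - 2) p" and ?r0 = "esym2 0 1 d p"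
  have r0_eq: "?r0 = real d * (real d - 1) / 2 * p\<^sup>2" by (simp add: esym2_def)
  have "0 \<le> real d * (real d - 1)" by (cases d) auto
  then have "0 \<le> ?r0" unfolding r0_eq by simp
  have "real d * (real d - 1) / 2 \<le> real d * real d / 2" by (simp add: algebra_simps)
  then have "?r0 \<le> real d * real d / 2 * p\<^sup>2" unfolding r0_eq by (rule mult_right_mono) simp
  also have "\<dots> = (real d * p)\<^sup>2 / 2" by (simp add: power2_eq_square)
  finally have r0: "0 \<le> ?r0" "?r0 \<le> (real d * p)\<^sup>2 / 2" using \<open>0 \<le> ?r0\<close> by simp_all
  have "?r1 \<le> (1 + real (d - 2) * p)\<^sup>2" using esym2_two_le[OF _ assms] by simp
  also have "\<dots> \<le> (1 + real d * p)\<^sup>2"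
    using assms by (intro power_mono add_left_mono mult_right_mono) auto
  finally have r1: "?r1 \<le> (1 + real d * p)\<^sup>2" .
  have "real (d - 2) * ?r0 \<le> real d * ((real d * p)\<^sup>2 / 2)"
    using r0 by (intro mult_mono) auto
  with r1 have "?r1 + real (d - 2) * ?r0 \<le> (1 + real d * p)\<^sup>2 + real d * (real d * p)\<^sup>2 / 2"
    by simp
  moreover have "0 \<le> ?r1 + real (d - 2) * ?r0"
    using esym2_ge_square[OF _ assms, of 1 "d - 2"] r0 by simp
  ultimately have "(?r1 + real (d - 2) * ?r0)\<^sup>2 \<le> ((1 + real d * p)\<^sup>2 + real d * (real d * p)\<^sup>2 / 2)\<^sup>2"
    by (rule power_mono)
  moreover have "self_overlap d p \<le> (?r1 + real (d - 2) * ?r0)\<^sup>2"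
    unfolding self_overlap_def
    using esym2_two_le[OF _ r0(1)] esym2_ge_square[OF _ assms, of 1 "d - 2"] by simp
  ultimately show ?thesis by linarith
qed

text \<open>\<open>u\<close> stands for \<open>d powr (-1/4)\<close>, so that \<open>4 * u ^ 7\<close> is the seed probability of the theorem.\<close>
locale degree_scaling =
  fixes d :: nat and u :: real
  assumes u_pos: "0 < u" and u_le: "u \<le> 1 / 100" and degree_eq: "real d * u ^ 4 = 1"
begin

abbreviation seed_prob :: real where
  "seed_prob \<equiv> 4 * u ^ 7"

lemma seed_prob_nonneg: "0 \<le> seed_prob"
  using u_pos by simp

lemma seed_prob_le_1: "seed_prob \<le> 1"
proof -
  have "u ^ 7 \<le> (1 / 100) ^ 7" using u_pos u_le by (intro power_mono) auto
  then show ?thesis by (simp add: power_divide)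
qed

lemma degree_times_seed_prob: "real d * seed_prob = 4 * u ^ 3"
proof -
  have "u ^ 7 = u ^ 3 * u ^ 4" by (simp flip: power_add)
  then have "real d * seed_prob = 4 * u ^ 3 * (real d * u ^ 4)" by (simp only: ac_simps)
  then show ?thesis using degree_eq by simp
qed

lemma degree_times_seed_prob_sq: "real d * (real d * seed_prob)\<^sup>2 / 2 = 8 * u\<^sup>2"
proof -
  have "real d * (real d * seed_prob)\<^sup>2 / 2 = 8 * u\<^sup>2 * (real d * u ^ 4)"
    unfolding degree_times_seed_prob by (simp add: power_mult_distrib flip: power_add)
  then show ?thesis using degree_eq by simp
qed

lemma first_moment_eq:
  "real d * (seed_prob ^ 4 * (real d * (real d - 1) / 2) ^ 3) = 32 * (1 - u ^ 4) ^ 3"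
proof -
  define e where "e = real d - 1"
  have d4: "real d * real d ^ 3 = real d ^ 4" by (simp add: power4_eq_xxxx power3_eq_cube)
  have "real d * (seed_prob ^ 4 * (real d * e / 2) ^ 3) = 32 * (real d * u ^ 4) ^ 4 * (e * u ^ 4) ^ 3"
    by (simp add: power_mult_distrib power_divide field_simps d4 flip: power_mult power_add)
  also have "\<dots> = 32 * (1 - u ^ 4) ^ 3"
    using degree_eq by (simp add: e_def algebra_simps)
  finally show ?thesis unfolding e_def .
qed

lemma first_moment_bounds:
  "3199 / 100 \<le> real d * (seed_prob ^ 4 * (real d * (real d - 1) / 2) ^ 3)"
  "real d * (seed_prob ^ 4 * (real d * (real d - 1) / 2) ^ 3) \<le> 32"
proof -
  have u4: "u ^ 4 \<le> (1 / 100) ^ 4" using u_pos u_le by (intro power_mono) auto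
  have "(9999 / 10000) ^ 3 \<le> (1 - u ^ 4 :: real) ^ 3"
    using u4 by (intro power_mono) (auto simp: power_divide)
  moreover have "3199 / 100 \<le> 32 * (9999 / 10000 :: real) ^ 3" by (simp add: power3_eq_cube)
  ultimately show "3199 / 100 \<le> real d * (seed_prob ^ 4 * (real d * (real d - 1) / 2) ^ 3)"
    unfolding first_moment_eq by linarith
  have "(1 - u ^ 4) ^ 3 \<le> (1 :: real)"
    using u4 u_pos by (intro power_le_one) (auto simp: power_divide)
  then show "real d * (seed_prob ^ 4 * (real d * (real d - 1) / 2) ^ 3) \<le> 32"
    unfolding first_moment_eq by simp
qed

lemma self_overlap_small: "self_overlap d seed_prob \<le> 101 / 100"
proof -
  have "u ^ 3 \<le> (1 / 100) ^ 3" using u_pos u_le by (intro power_mono) auto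
  then have "(1 + real d * seed_prob)\<^sup>2 \<le> (1 + 4 / 100 ^ 3)\<^sup>2"
    unfolding degree_times_seed_prob using u_pos by (intro power_mono) (auto simp: power_divide)
  moreover have "real d * (real d * seed_prob)\<^sup>2 / 2 \<le> 8 / 100 ^ 2"
    unfolding degree_times_seed_prob_sq using u_pos u_le power_mono[OF u_le, of 2] by (simp add: power_divide)
  ultimately have "(1 + real d * seed_prob)\<^sup>2 + real d * (real d * seed_prob)\<^sup>2 / 2
      \<le> (1 + 4 / 100 ^ 3)\<^sup>2 + 8 / 100 ^ 2"
    by linarith
  then have "((1 + real d * seed_prob)\<^sup>2 + real d * (real d * seed_prob)\<^sup>2 / 2)\<^sup>2
      \<le> ((1 + 4 / 100 ^ 3)\<^sup>2 + 8 / 100 ^ 2)\<^sup>2"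
    using seed_prob_nonneg by (intro power_mono) auto
  moreover have "((1 + 4 / 100 ^ 3)\<^sup>2 + 8 / 100 ^ 2)\<^sup>2 \<le> (101 / 100 :: real)"
    by (simp add: power2_eq_square)
  ultimately show ?thesis
    using self_overlap_le[OF seed_prob_nonneg, of d] by linarith
qed

lemma cross_overlap_small: "cross_overlap d seed_prob \<le> 52"
proof -
  have c: "overlap_base d seed_prob = u\<^sup>2 * (8 + 16 * u)"
    unfolding overlap_base_def degree_times_seed_prob_sq unfolding degree_times_seed_prob
    by (simp add: algebra_simps power2_eq_square power3_eq_cube)
  have "real d * (overlap_base d seed_prob)\<^sup>2 = (8 + 16 * u)\<^sup>2 * (real d * u ^ 4)"
    unfolding c by (simp add: power_mult_distrib flip: power_mult)
  also have "\<dots> \<le> (8 + 16 / 100)\<^sup>2"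
    using degree_eq u_pos u_le by (simp add: power_mono)
  finally have "real d * (overlap_base d seed_prob)\<^sup>2 \<le> (8 + 16 / 100)\<^sup>2" .
  moreover have "overlap_base d seed_prob \<le> (1 / 100)\<^sup>2 * (8 + 16 / 100)"
    unfolding c using u_pos u_le by (intro mult_mono power_mono) auto
  ultimately show ?thesis
    unfolding cross_overlap_def by (simp add: power2_eq_square)
qed

lemma half_le_prob_activated_conditions:
  defines "\<mu> \<equiv> real d * (seed_prob ^ 4 * (real d * (real d - 1) / 2) ^ 3)"
  shows "1 \<le> \<mu> / self_overlap d seed_prob"
    and "\<mu> * cross_overlap d seed_prob \<le> 2 * (\<mu> / self_overlap d seed_prob - 1)\<^sup>2"
proof -
  have Q: "1 \<le> self_overlap d seed_prob" by (rule one_le_self_overlap[OF seed_prob_nonneg])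
  have "(3199 / 100) / (101 / 100) \<le> \<mu> / self_overlap d seed_prob"
    unfolding \<mu>_def by (rule frac_le) (use first_moment_bounds Q self_overlap_small in auto)
  then have L: "3199 / 101 \<le> \<mu> / self_overlap d seed_prob" by simp
  then show "1 \<le> \<mu> / self_overlap d seed_prob" by linarith
  have "\<mu> * cross_overlap d seed_prob \<le> 32 * 52"
    unfolding \<mu>_def using first_moment_bounds cross_overlap_small cross_overlap_pos[OF seed_prob_nonneg, of d]
    by (intro mult_mono) auto
  also have "\<dots> \<le> 2 * (3199 / 101 - 1)\<^sup>2" by (simp add: power2_eq_square)
  also have "\<dots> \<le> 2 * (\<mu> / self_overlap d seed_prob - 1)\<^sup>2"
    using L by (intro mult_left_mono power_mono) auto
  finally show "\<mu> * cross_overlap d seed_prob \<le> 2 * (\<mu> / self_overlap d seed_prob - 1)\<^sup>2" .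
qed

end

lemma degree_scaling_quarter_root:
  assumes "100 ^ 4 \<le> d"
  shows "degree_scaling d (real d powr (-1/4))"
    and "4 * real d powr (-7/4) = 4 * (real d powr (-1/4)) ^ 7"
proof -
  let ?u = "real d powr (-1/4)"
  have "0 < real d" using assms by simp
  then have u: "0 < ?u" "real d * ?u ^ 4 = 1" "real d powr (-7/4) = ?u ^ 7"
    by (simp_all add: powr_power powr_mult_base)
  then show "4 * real d powr (-7/4) = 4 * ?u ^ 7" by simp
  have "?u \<le> 1 / 100"
  proof (rule ccontr)
    assume "\<not> ?u \<le> 1 / 100"
    then have "real d * (1 / 100) ^ 4 < real d * ?u ^ 4"
      using \<open>0 < real d\<close> by (intro mult_strict_left_mono power_strict_mono) auto
    moreover have "(100 :: real) ^ 4 \<le> real d" using of_nat_le_iff[THEN iffD2, OF assms] by simp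
    ultimately show False using u(2) by (simp add: power_divide del: of_nat_le_iff)
  qed
  with u show "degree_scaling d ?u" by unfold_locales
qed

theorem lemma6:
  shows "\<exists>d0::nat. \<forall>d\<ge>d0. \<forall>V E v f.
     fin_graph V E \<and> (\<forall>u\<in>V. card (nbhd E u) \<ge> d + 1) \<and> v \<in> V \<and>
     dk_tree E d 3 v f \<and> four_proper d 3 f \<longrightarrow>
     prob_activated V E (4 * real d powr (-7/4)) v \<ge> 1/2"
proof (intro exI[of _ "100 ^ 4"] allI impI, elim conjE)
  fix d :: nat and V E v f
  \<comment> \<open>The degree bound and \<open>v \<in> V\<close> only serve to guarantee that such a tree exists.\<close>
  assume d: "100 ^ 4 \<le> d" and tree: "fin_graph V E" "dk_tree E d 3 v f" "four_proper d 3 f"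
  interpret degree_scaling d "real d powr (-1/4)"
    by (rule degree_scaling_quarter_root(1)[OF d])
  interpret seeded_proper_3_tree V E d v f seed_prob
    using tree seed_prob_nonneg seed_prob_le_1 by unfold_locales
  show "1 / 2 \<le> prob_activated V E (4 * real d powr (-7/4)) v"
    unfolding degree_scaling_quarter_root(2)[OF d]
    using half_le_prob_activated_conditions card_witnesses
    by (intro half_le_prob_activated) simp_all
qed

end
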